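(* Let $[N]=\{1,\dots,N\}$ be a set of arms, $H\ge 1$ a horizon, and let $\tau$ be a trajectory specifying, for every time step $h\in[H]$ and arm $i\in[N]$, a state $s_h^{i}$ and a binary action $a_h^{i}\in\{0,1\}$. For each $h\in[H]$ let $f_{\text{source}}(h)\subseteq[N]$ and $f_{\text{target}}(h)\subseteq[N]$ be given sets of arms (they may be determined by static features of the arms and by the states and actions recorded in $\tau$). Consider the following randomized procedure (the "Convert Aggregate Behavior to Trajectory" algorithm). For $h=1,2,\dots,H$: set $C_{A,h}=\{c\in f_{\text{source}}(h): a_h^{c}=1\}$ and $C_{B,h}=\{c\in f_{\text{target}}(h): a_h^{c}=0\}$; then, iterating over the elements $c_B\in C_{B,h}$ in a fixed order, if $C_{A,h}\neq\varnothing$, choose $c_A$ uniformly at random from the current $C_{A,h}$, set $a_h^{c_B}=1$ and $a_h^{c_A}=0$, and remove $c_A$ from $C_{A,h}$. All random choices are made independently. The procedure returns the modified trajectory. Then this procedure allocates actions with maximum entropy: any two trajectories that the procedure outputs with positive probability are output with equal probability, i.e. the output is uniformly distributed over its support (equivalently, the output distribution has maximum Shannon entropy among all distributions on that support).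
   Context: An RMAB has $N$ arms; at each time step each arm is in a state and receives action $1$ (intervene/pull) or $0$ (no intervention). A trajectory records the joint states and joint actions of all arms over time steps $1,\dots,H$. The procedure only changes actions, never states. *)

theory Defs
  imports "HOL-Probability.Probability_Mass_Function"
begin

text \<open>A trajectory: states s h i and actions a h i (time step h, arm i).\<close>
type_synonym 's traj = "(nat \<Rightarrow> nat \<Rightarrow> 's) \<times> (nat \<Rightarrow> nat \<Rightarrow> nat)"

fun reassign :: "nat list \<Rightarrow> nat set \<Rightarrow> (nat \<Rightarrow> nat) \<Rightarrow> (nat \<Rightarrow> nat) pmf" where
  "reassign [] CA act = return_pmf act"
| "reassign (cb # cbs) CA act =
     (if CA = {} then reassign cbs CA act
      else bind_pmf (pmf_of_set CA)
             (\<lambda>ca. reassign cbs (CA - {ca}) ((act(cb := 1))(ca := 0))))"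

definition cabt_step :: "(nat \<Rightarrow> nat set) \<Rightarrow> (nat \<Rightarrow> nat set) \<Rightarrow> nat \<Rightarrow> 's traj \<Rightarrow> 's traj pmf" where
  "cabt_step fsrc ftgt h \<tau> =
     (let s = fst \<tau>; a = snd \<tau>;
          CA = {c \<in> fsrc h. a h c = 1};
          CB = {c \<in> ftgt h. a h c = 0}
      in map_pmf (\<lambda>act. (s, a(h := act))) (reassign (sorted_list_of_set CB) CA (a h)))"

definition cabt :: "(nat \<Rightarrow> nat set) \<Rightarrow> (nat \<Rightarrow> nat set) \<Rightarrow> nat \<Rightarrow> 's traj \<Rightarrow> 's traj pmf" where
  "cabt fsrc ftgt H \<tau> = foldl (\<lambda>M h. bind_pmf M (cabt_step fsrc ftgt h)) (return_pmf \<tau>) [1..<H+1]"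

end

theory Submission
  imports Defs
begin

text \<open>
  At a fixed time step the inner loop draws the source arms one after the other without
  replacement, so the sequence of drawn arms is a uniformly random list of distinct source arms
  of length k = min |C_B| |C_A|. The resulting action vector only depends on the set of drawn
  arms, and every k-subset arises from exactly k! lists, so the output of a time step is uniform
  on its support. Since time step h changes only the actions at h and reads only the actions
  at h, the supports of different predecessors are disjoint and equally large, and uniformity
  is preserved by the outer loop.
\<close>

definition distinct_lists :: "'a set \<Rightarrow> nat \<Rightarrow> 'a list set" where
  "distinct_lists A k = {xs. length xs = k \<and> distinct xs \<and> set xs \<subseteq> A}"

fun apply_swaps :: "'a list \<Rightarrow> ('a \<Rightarrow> nat) \<Rightarrow> 'a list \<Rightarrow> 'a \<Rightarrow> nat" where
  "apply_swaps (cb # cbs) act (ca # cas) = apply_swaps cbs ((act(cb := 1))(ca := 0)) cas"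
| "apply_swaps _ act _ = act"

lemma finite_distinct_lists: "finite A \<Longrightarrow> finite (distinct_lists A k)"
  unfolding distinct_lists_def
  by (rule rev_finite_subset[OF finite_lists_length_eq[of A k]]) auto

lemma distinct_lists_nonempty:
  assumes "finite A" "k \<le> card A"
  shows "distinct_lists A k \<noteq> {}"
proof -
  obtain xs where "set xs = A" "distinct xs"
    using finite_distinct_list[OF assms(1)] by blast
  then have "take k xs \<in> distinct_lists A k"
    using assms(2) unfolding distinct_lists_def by (auto simp: distinct_card dest: in_set_takeD)
  then show ?thesis by blast
qed

lemma distinct_lists_0 [simp]: "distinct_lists A 0 = {[]}"
  unfolding distinct_lists_def by auto

lemma distinct_lists_Suc: "distinct_lists A (Suc k) = (\<Union>x\<in>A. Cons x ` distinct_lists (A - {x}) k)"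
proof (intro equalityI subsetI)
  fix xs assume "xs \<in> distinct_lists A (Suc k)"
  then obtain y ys where
      "xs = y # ys" "y \<in> A" "set ys \<subseteq> A" "y \<notin> set ys" "distinct ys" "length ys = k"
    unfolding distinct_lists_def by (auto simp: length_Suc_conv)
  then have "xs = y # ys" "y \<in> A" "ys \<in> distinct_lists (A - {y}) k"
    unfolding distinct_lists_def by auto
  then show "xs \<in> (\<Union>x\<in>A. Cons x ` distinct_lists (A - {x}) k)" by blast
qed (auto simp: distinct_lists_def)

lemma card_distinct_lists:
  "finite A \<Longrightarrow> k \<le> card A \<Longrightarrow> card (distinct_lists A k) = \<Prod>{card A - k + 1 .. card A}"
  unfolding distinct_lists_def by (rule card_lists_distinct_length_eq)

lemma pmf_of_set_distinct_lists_Suc: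
  assumes "finite A" "k < card A"
  shows "pmf_of_set (distinct_lists A (Suc k)) =
    pmf_of_set A \<bind> (\<lambda>x. map_pmf (Cons x) (pmf_of_set (distinct_lists (A - {x}) k)))"
proof -
  have A: "A \<noteq> {}" using assms by auto
  have card_remove: "k \<le> card (A - {x})" if "x \<in> A" for x
    using assms that by auto
  have "pmf_of_set A \<bind> (\<lambda>x. map_pmf (Cons x) (pmf_of_set (distinct_lists (A - {x}) k)))
      = pmf_of_set A \<bind> (\<lambda>x. pmf_of_set (Cons x ` distinct_lists (A - {x}) k))"
    using assms A card_remove
    by (intro bind_pmf_cong refl map_pmf_of_set_inj)
       (auto simp: finite_distinct_lists distinct_lists_nonempty)
  also have "\<dots> = pmf_of_set (\<Union>x\<in>A. Cons x ` distinct_lists (A - {x}) k)"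
    using assms A card_remove
    by (intro pmf_of_set_UN[symmetric, where n = "\<Prod>{card A - 1 - k + 1 .. card A - 1}"])
       (auto simp: finite_distinct_lists distinct_lists_nonempty card_image card_distinct_lists
         disjoint_family_on_def)
  finally show ?thesis by (simp add: distinct_lists_Suc)
qed

lemma reassign_eq_map_apply_swaps:
  "finite CA \<Longrightarrow>
   reassign cbs CA act =
     map_pmf (apply_swaps cbs act) (pmf_of_set (distinct_lists CA (min (length cbs) (card CA))))"
proof (induction cbs arbitrary: CA act)
  case Nil
  then show ?case by (simp add: pmf_of_set_singleton)
next
  case (Cons cb cbs)
  show ?case
  proof (cases "CA = {}")
    case True
    then show ?thesis using Cons by (simp add: pmf_of_set_singleton)
  next
    case False
    define k where "k = min (length cbs) (card CA - 1)"
    have card_CA: "card CA > 0" using False Cons.prems by auto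
    then have min_eq: "min (length (cb # cbs)) (card CA) = Suc k" and "k < card CA"
      unfolding k_def by auto
    have "map_pmf (apply_swaps (cb # cbs) act)
            (pmf_of_set (distinct_lists CA (min (length (cb # cbs)) (card CA))))
       = pmf_of_set CA \<bind> (\<lambda>x. map_pmf (apply_swaps cbs ((act(cb := 1))(x := 0)))
                               (pmf_of_set (distinct_lists (CA - {x}) k)))"
      unfolding min_eq pmf_of_set_distinct_lists_Suc[OF Cons.prems \<open>k < card CA\<close>]
      by (simp add: map_bind_pmf map_pmf_comp)
    also have "\<dots> = pmf_of_set CA \<bind> (\<lambda>x. reassign cbs (CA - {x}) ((act(cb := 1))(x := 0)))"
    proof (intro bind_pmf_cong refl)
      fix x assume "x \<in> set_pmf (pmf_of_set CA)"
      then have "card (CA - {x}) = card CA - 1" using False Cons.prems by simp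
      then show "map_pmf (apply_swaps cbs ((act(cb := 1))(x := 0)))
          (pmf_of_set (distinct_lists (CA - {x}) k)) = reassign cbs (CA - {x}) ((act(cb := 1))(x := 0))"
        using Cons.IH[of "CA - {x}"] Cons.prems unfolding k_def by simp
    qed
    finally show ?thesis using False by simp
  qed
qed

lemma apply_swaps_pointwise:
  assumes "set cas \<inter> set cbs = {}" "distinct cas" "length cas \<le> length cbs"
  shows "apply_swaps cbs act cas c =
    (if c \<in> set cas then 0 else if c \<in> set (take (length cas) cbs) then 1 else act c)"
  using assms
proof (induction cas arbitrary: cbs act)
  case Nil
  then show ?case by (cases cbs) auto
next
  case (Cons ca cas)
  then obtain cb cbs' where cbs: "cbs = cb # cbs'" by (cases cbs) auto
  with Cons show ?case by (auto dest: in_set_takeD)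
qed

lemma apply_swaps_eq_iff_set_eq:
  assumes "xs \<in> distinct_lists CA k" "ys \<in> distinct_lists CA k" "k \<le> length cbs"
    and "set cbs \<inter> CA = {}" "\<forall>c\<in>CA. act c \<noteq> 0"
  shows "apply_swaps cbs act xs = apply_swaps cbs act ys \<longleftrightarrow> set xs = set ys"
proof -
  have pointwise: "apply_swaps cbs act zs c =
      (if c \<in> set zs then 0 else if c \<in> set (take k cbs) then 1 else act c)"
    if "zs \<in> distinct_lists CA k" for zs c
    using that assms(3,4) unfolding distinct_lists_def
    by (subst apply_swaps_pointwise) auto
  have outside_targets: "c \<notin> set (take k cbs) \<and> act c \<noteq> 0" if "c \<in> set xs \<union> set ys" for c
    using that assms unfolding distinct_lists_def by (auto dest: in_set_takeD)
  show ?thesis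
  proof
    assume eq: "apply_swaps cbs act xs = apply_swaps cbs act ys"
    have "c \<in> set xs \<longleftrightarrow> c \<in> set ys" for c
      using fun_cong[OF eq, of c] outside_targets[of c]
      by (auto simp: pointwise[OF assms(1)] pointwise[OF assms(2)] split: if_splits)
    then show "set xs = set ys" by blast
  next
    assume "set xs = set ys"
    then show "apply_swaps cbs act xs = apply_swaps cbs act ys"
      by (simp add: fun_eq_iff pointwise[OF assms(1)] pointwise[OF assms(2)])
  qed
qed

lemma map_pmf_of_set_equal_card_fibres:
  assumes "finite D" "D \<noteq> {}" "\<And>x. x \<in> D \<Longrightarrow> card {y \<in> D. f y = f x} = n"
  shows "map_pmf f (pmf_of_set D) = pmf_of_set (f ` D)"
proof -
  let ?fibre = "\<lambda>z. {y \<in> D. f y = z}"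
  have D_eq: "D = (\<Union>z\<in>f ` D. ?fibre z)" by auto
  have "pmf_of_set D = pmf_of_set (f ` D) \<bind> (\<lambda>z. pmf_of_set (?fibre z))"
    using assms by (subst D_eq, intro pmf_of_set_UN) (auto simp: disjoint_family_on_def)
  then have "map_pmf f (pmf_of_set D)
      = pmf_of_set (f ` D) \<bind> (\<lambda>z. map_pmf f (pmf_of_set (?fibre z)))"
    by (simp add: map_bind_pmf)
  also have "\<dots> = pmf_of_set (f ` D) \<bind> return_pmf"
  proof (intro bind_pmf_cong refl)
    fix z assume "z \<in> set_pmf (pmf_of_set (f ` D))"
    then have "?fibre z \<noteq> {}" "finite (?fibre z)" using assms by auto
    then have "map_pmf f (pmf_of_set (?fibre z)) = map_pmf (\<lambda>_. z) (pmf_of_set (?fibre z))"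
      by (intro map_pmf_cong) auto
    then show "map_pmf f (pmf_of_set (?fibre z)) = return_pmf z" by simp
  qed
  finally show ?thesis by (simp add: bind_return_pmf')
qed

lemma reassign_eq_pmf_of_set:
  assumes "finite CA" "set cbs \<inter> CA = {}" "\<forall>c\<in>CA. act c \<noteq> 0"
  shows "reassign cbs CA act =
    pmf_of_set (apply_swaps cbs act ` distinct_lists CA (min (length cbs) (card CA)))"
proof -
  define k where "k = min (length cbs) (card CA)"
  let ?D = "distinct_lists CA k"
  have fibre: "{ys \<in> ?D. apply_swaps cbs act ys = apply_swaps cbs act xs} = distinct_lists (set xs) k"
    if "xs \<in> ?D" for xs
    using that apply_swaps_eq_iff_set_eq[OF _ that, of _ cbs act] assms(2,3)
    unfolding k_def distinct_lists_def
    by (auto simp: distinct_card card_subset_eq)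
  have "card {ys \<in> ?D. apply_swaps cbs act ys = apply_swaps cbs act xs} = \<Prod>{1..k}"
    if "xs \<in> ?D" for xs
  proof -
    have "card (set xs) = k" using that by (simp add: distinct_lists_def distinct_card)
    then show ?thesis by (simp add: fibre[OF that] card_distinct_lists)
  qed
  then show ?thesis
    unfolding reassign_eq_map_apply_swaps[OF assms(1)] k_def[symmetric]
    using assms(1) by (intro map_pmf_of_set_equal_card_fibres)
      (auto simp: finite_distinct_lists distinct_lists_nonempty k_def)
qed

lemma bind_pmf_of_set_map_update:
  fixes S :: "('a \<times> ('h \<Rightarrow> 'b)) set" and h :: 'h
  defines "upd \<equiv> \<lambda>x b. (fst x, (snd x)(h := b))"
  assumes S: "finite S" "S \<noteq> {}" and T: "finite T" "T \<noteq> {}"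
    and agree_at_h: "\<And>x y. x \<in> S \<Longrightarrow> y \<in> S \<Longrightarrow> snd x h = snd y h"
  shows "pmf_of_set S \<bind> (\<lambda>x. map_pmf (upd x) (pmf_of_set T)) = pmf_of_set (\<Union>x\<in>S. upd x ` T)"
proof -
  have inj: "inj_on (upd x) T" for x
  proof (rule inj_onI)
    fix a b assume "upd x a = upd x b"
    then have "((snd x)(h := a)) h = ((snd x)(h := b)) h" by (simp add: upd_def)
    then show "a = b" by simp
  qed
  have "x = y" if "x \<in> S" "y \<in> S" "upd x a = upd y b" for x y a b
  proof -
    from that(3) have fst_eq: "fst x = fst y" and snd_upd_eq: "(snd x)(h := a) = (snd y)(h := b)"
      by (simp_all add: upd_def)
    have "snd x h' = snd y h'" for h'
    proof (cases "h' = h")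
      case True
      then show ?thesis using agree_at_h[OF that(1,2)] by simp
    next
      case False
      then show ?thesis using fun_cong[OF snd_upd_eq, of h'] by simp
    qed
    then show ?thesis using fst_eq by (simp add: prod_eq_iff fun_eq_iff)
  qed
  then have disjoint: "disjoint_family_on (\<lambda>x. upd x ` T) S"
    unfolding disjoint_family_on_def by blast
  have "pmf_of_set S \<bind> (\<lambda>x. map_pmf (upd x) (pmf_of_set T))
      = pmf_of_set S \<bind> (\<lambda>x. pmf_of_set (upd x ` T))"
    using inj T by (simp add: map_pmf_of_set_inj)
  also have "\<dots> = pmf_of_set (\<Union>x\<in>S. upd x ` T)"
    using S T inj disjoint
    by (intro pmf_of_set_UN[symmetric, where n = "card T"]) (auto simp: card_image)
  finally show ?thesis .
qed

lemma foldl_cabt_step_eq_pmf_of_set: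
  fixes \<tau> :: "'s traj"
  assumes "distinct hs" "\<forall>h\<in>set hs. finite (fsrc h)"
  shows "\<exists>S. finite S \<and> S \<noteq> {} \<and>
    foldl (\<lambda>M h. M \<bind> cabt_step fsrc ftgt h) (return_pmf \<tau>) hs = pmf_of_set S \<and>
    (\<forall>x\<in>S. \<forall>h. h \<notin> set hs \<longrightarrow> snd x h = snd \<tau> h)"
  using assms
proof (induction hs rule: rev_induct)
  case Nil
  show ?case by (intro exI[of _ "{\<tau>}"]) (simp add: pmf_of_set_singleton)
next
  case (snoc h hs)
  then obtain S where S: "finite S" "S \<noteq> {}"
      "foldl (\<lambda>M h. M \<bind> cabt_step fsrc ftgt h) (return_pmf \<tau>) hs = pmf_of_set S"
      and S_agrees: "\<forall>x\<in>S. \<forall>h. h \<notin> set hs \<longrightarrow> snd x h = snd \<tau> h"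
    by auto
  define CA where "CA = {c \<in> fsrc h. snd \<tau> h c = 1}"
  define cbs where "cbs = sorted_list_of_set {c \<in> ftgt h. snd \<tau> h c = 0}"
  define T where "T = apply_swaps cbs (snd \<tau> h) ` distinct_lists CA (min (length cbs) (card CA))"
  define upd where "upd = (\<lambda>(x :: 's traj) act. (fst x, (snd x)(h := act)))"
  have "finite CA" using snoc.prems unfolding CA_def by simp
  moreover have "set cbs \<inter> CA = {}"
    unfolding cbs_def CA_def
    by (cases "finite {c \<in> ftgt h. snd \<tau> h c = 0}") auto
  ultimately have reassign_eq: "reassign cbs CA (snd \<tau> h) = pmf_of_set T"
    unfolding T_def by (intro reassign_eq_pmf_of_set) (auto simp: CA_def)
  have T: "finite T" "T \<noteq> {}"
    using \<open>finite CA\<close> by (auto simp: T_def finite_distinct_lists distinct_lists_nonempty)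
  have S_at_h: "snd x h = snd \<tau> h" if "x \<in> S" for x
    using S_agrees that snoc.prems by auto
  have step_eq: "cabt_step fsrc ftgt h x = map_pmf (upd x) (pmf_of_set T)" if "x \<in> S" for x
    using S_at_h[OF that] reassign_eq
    by (simp add: cabt_step_def upd_def CA_def cbs_def)
  have "foldl (\<lambda>M h. M \<bind> cabt_step fsrc ftgt h) (return_pmf \<tau>) (hs @ [h])
      = pmf_of_set S \<bind> cabt_step fsrc ftgt h"
    by (simp add: S(3))
  also have "\<dots> = pmf_of_set S \<bind> (\<lambda>x. map_pmf (upd x) (pmf_of_set T))"
    using S(1,2) step_eq by (intro bind_pmf_cong) auto
  also have "\<dots> = pmf_of_set (\<Union>x\<in>S. upd x ` T)"
    unfolding upd_def using S T S_at_h by (intro bind_pmf_of_set_map_update) auto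
  finally show ?case
    using S T S_agrees by (intro exI[of _ "\<Union>x\<in>S. upd x ` T"]) (auto simp: upd_def)
qed

theorem theorem1:
  fixes N H :: nat and \<tau> :: "'s traj"
    and fsrc ftgt :: "nat \<Rightarrow> nat set"
  assumes "H \<ge> 1"
    and "\<forall>h\<in>{1..H}. \<forall>i\<in>{1..N}. snd \<tau> h i \<in> {0, 1}"
    and "\<forall>h\<in>{1..H}. fsrc h \<subseteq> {1..N} \<and> ftgt h \<subseteq> {1..N}"
  shows "\<forall>\<tau>1 \<in> set_pmf (cabt fsrc ftgt H \<tau>). \<forall>\<tau>2 \<in> set_pmf (cabt fsrc ftgt H \<tau>).
           pmf (cabt fsrc ftgt H \<tau>) \<tau>1 = pmf (cabt fsrc ftgt H \<tau>) \<tau>2"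
proof -
  have finite_sources: "\<forall>h\<in>set [1..<H+1]. finite (fsrc h)"
  proof
    fix h assume "h \<in> set [1..<H+1]"
    then have "fsrc h \<subseteq> {1..N}" using assms(3) by auto
    then show "finite (fsrc h)" by (rule finite_subset) simp
  qed
  obtain S where "finite S" "S \<noteq> {}" "cabt fsrc ftgt H \<tau> = pmf_of_set S"
    using foldl_cabt_step_eq_pmf_of_set[OF distinct_upt finite_sources,
        where ftgt = ftgt and \<tau> = \<tau>]
    unfolding cabt_def by blast
  then show ?thesis by (simp add: pmf_of_set)
qed

end
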